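(* For every real $r$ with $0<r<1/2$ and every $M>0$ there exists a nilpotent square complex matrix $S$ (of size depending on $r$ and $M$) such that $\|\sqrt{I-S}\|\le3$, whereas $\|\sqrt{\tau-S}\|\ge M$ for every $\tau\in\mathbb C$ with $|\tau-1|=r$. (One may take $S=4J_N-4J_N^2$ for $N$ large enough, where $J_N$ is the $N\times N$ Jordan block with ones on the first subdiagonal and zeros elsewhere.)
   Context: Matrix norms are operator norms induced by the Euclidean norm. $\sqrt{\tau-S}$ is defined by the Riesz–Dunford (holomorphic) functional calculus applied to the function $z\mapsto\sqrt{\tau-z}$, which is holomorphic near $\sigma(S)=\{0\}$, where $\sqrt{\cdot}$ is the principal branch $\sqrt w=|w|^{1/2}e^{i(\arg w)/2}$, $\arg w\in(-\pi,\pi]$. *)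

theory Defs
  imports "HOL-Analysis.Analysis" "Jordan_Normal_Form.Matrix"
begin

definition nilpotent_mat :: "complex mat \<Rightarrow> bool" where
  "nilpotent_mat S \<longleftrightarrow> (\<exists>k. S ^\<^sub>m k = 0\<^sub>m (dim_row S) (dim_col S))"

definition vec_norm2 :: "complex vec \<Rightarrow> real" where
  "vec_norm2 v = sqrt (\<Sum>i<dim_vec v. (cmod (v $ i))\<^sup>2)"

definition op_norm :: "complex mat \<Rightarrow> real" where
  "op_norm A = Sup {vec_norm2 (A *\<^sub>v v) | v. v \<in> carrier_vec (dim_col A) \<and> vec_norm2 v = 1}"

definition resolvent :: "complex mat \<Rightarrow> complex \<Rightarrow> complex mat" where
  "resolvent S z = (THE B. B \<in> carrier_mat (dim_row S) (dim_row S) \<and>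
      (z \<cdot>\<^sub>m 1\<^sub>m (dim_row S) - S) * B = 1\<^sub>m (dim_row S))"

text \<open>Riesz--Dunford integral (1/(2 pi i)) \<ointegral> f(z) (zI - S)^(-1) dz over the circle
  |z| = rho (positively oriented), computed entrywise.\<close>
definition rd_circle :: "(complex \<Rightarrow> complex) \<Rightarrow> complex mat \<Rightarrow> real \<Rightarrow> complex mat" where
  "rd_circle f S \<rho> = mat (dim_row S) (dim_col S) (\<lambda>(i,j).
     integral {0..2*pi} (\<lambda>t. f (of_real \<rho> * cis t) * (resolvent S (of_real \<rho> * cis t) $$ (i,j))
                               * (\<i> * of_real \<rho> * cis t)) / (2 * of_real pi * \<i>))"

text \<open>Holomorphic functional calculus for a matrix with spectrum {0} (e.g. nilpotent):
  the contour is any small circle around 0 inside the domain of holomorphy of f;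
  by Cauchy's theorem the integral is independent of small radii, so we take the
  limit as the radius tends to 0+.\<close>
definition holo_calc0 :: "(complex \<Rightarrow> complex) \<Rightarrow> complex mat \<Rightarrow> complex mat" where
  "holo_calc0 f S = mat (dim_row S) (dim_col S) (\<lambda>(i,j). Lim (at_right 0) (\<lambda>\<rho>. rd_circle f S \<rho> $$ (i,j)))"

definition sqrt_shift :: "complex \<Rightarrow> complex mat \<Rightarrow> complex mat" where
  "sqrt_shift \<tau> S = holo_calc0 (\<lambda>z. csqrt (\<tau> - z)) S"

end

theory Submission imports Defs "HOL-Complex_Analysis.Complex_Analysis" begin

text \<open>
  A lower triangular Toeplitz matrix with zero diagonal is the image of a formal power series
  without constant term under the truncation map, which is a ring homomorphism; the
  Riesz--Dunford calculus of a holomorphic f on such a matrix is therefore the truncated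
  composition of the Taylor series of f with the symbol. For S = 4J - 4J^2, whose symbol is
  P(w) = 4w - 4w^2, the matrix sqrt(\<tau> - S) is the truncation of a power series A with
  A^2 = \<tau> - P. For \<tau> = 1 this is 1 - 2w, giving the matrix I - 2J of norm at most 3.
  For \<tau> \<noteq> 1 near 1 the coefficients of A are unbounded: otherwise A would be holomorphic
  in the unit disc, while \<tau> - P has a simple zero there and so cannot be a square. Each
  coefficient depends continuously on \<tau>, so compactness of the circle |\<tau> - 1| = r yields a
  single size N at which some entry of sqrt(\<tau> - S) exceeds M for every such \<tau>.
\<close>

section \<open>Lower triangular Toeplitz matrices\<close>

definition lower_toeplitz :: "nat \<Rightarrow> complex fps \<Rightarrow> complex mat" where
  "lower_toeplitz n a = mat n n (\<lambda>(i,j). if j \<le> i then fps_nth a (i-j) else 0)"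

lemma lower_toeplitz_carrier [simp]: "lower_toeplitz n a \<in> carrier_mat n n"
  and dim_row_lower_toeplitz [simp]: "dim_row (lower_toeplitz n a) = n"
  and dim_col_lower_toeplitz [simp]: "dim_col (lower_toeplitz n a) = n"
  by (auto simp: lower_toeplitz_def)

lemma index_lower_toeplitz [simp]:
  "i < n \<Longrightarrow> j < n \<Longrightarrow> lower_toeplitz n a $$ (i,j) = (if j \<le> i then fps_nth a (i-j) else 0)"
  by (simp add: lower_toeplitz_def)

lemma lower_toeplitz_cong:
  "(\<And>m. m < n \<Longrightarrow> fps_nth a m = fps_nth b m) \<Longrightarrow> lower_toeplitz n a = lower_toeplitz n b"
  by (intro eq_matI) auto

lemma lower_toeplitz_one: "lower_toeplitz n 1 = 1\<^sub>m n"
  by (intro eq_matI) auto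

lemma lower_toeplitz_diff: "lower_toeplitz n (a - b) = lower_toeplitz n a - lower_toeplitz n b"
  by (intro eq_matI) auto

lemma lower_toeplitz_const: "lower_toeplitz n (fps_const z) = z \<cdot>\<^sub>m 1\<^sub>m n"
  by (intro eq_matI) auto

lemma lower_toeplitz_mult: "lower_toeplitz n a * lower_toeplitz n b = lower_toeplitz n (a * b)"
proof (intro eq_matI)
  fix i j assume "i < dim_row (lower_toeplitz n (a*b))" "j < dim_col (lower_toeplitz n (a*b))"
  hence i: "i < n" and j: "j < n" by auto
  have "(lower_toeplitz n a * lower_toeplitz n b) $$ (i,j) =
      (\<Sum>l\<in>{0..<n}. lower_toeplitz n a $$ (i,l) * lower_toeplitz n b $$ (l,j))"
    using i j by (simp add: scalar_prod_def)
  also have "\<dots> = (\<Sum>l\<in>{0..<n}. if j \<le> l \<and> l \<le> i then fps_nth a (i-l) * fps_nth b (l-j) else 0)"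
    using i j by (intro sum.cong) auto
  also have "\<dots> = (\<Sum>l\<in>{j..i}. fps_nth a (i-l) * fps_nth b (l-j))"
    using i j by (subst sum.inter_filter[symmetric]) (auto intro!: sum.cong)
  also have "\<dots> = (if j \<le> i then fps_nth (a*b) (i-j) else 0)"
  proof (cases "j \<le> i")
    case True
    have "(\<Sum>l\<in>{j..i}. fps_nth a (i-l) * fps_nth b (l-j)) =
        (\<Sum>q\<in>{0..i-j}. fps_nth a (i-j-q) * fps_nth b q)"
      using True by (intro sum.reindex_bij_witness[where i="\<lambda>q. q + j" and j="\<lambda>l. l - j"]) auto
    also have "\<dots> = fps_nth (b*a) (i-j)"
      by (simp add: fps_mult_nth mult.commute[of "fps_nth b _"])
    finally show ?thesis using True by (simp add: mult.commute)
  qed auto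
  finally show "(lower_toeplitz n a * lower_toeplitz n b) $$ (i,j) = lower_toeplitz n (a*b) $$ (i,j)"
    using i j by simp
qed auto

lemma lower_toeplitz_power: "lower_toeplitz n a ^\<^sub>m k = lower_toeplitz n (a ^ k)"
  by (induction k) (auto simp: lower_toeplitz_one lower_toeplitz_mult power_Suc2 mult.commute)

lemma fps_nth_power_eq_0:
  fixes a :: "'a::idom fps"
  shows "fps_nth a 0 = 0 \<Longrightarrow> m < k \<Longrightarrow> fps_nth (a ^ k) m = 0"
  using startsby_zero_power_prefix[of a k] by auto

lemma nilpotent_lower_toeplitz:
  assumes "fps_nth a 0 = 0"
  shows "nilpotent_mat (lower_toeplitz n a)"
  unfolding nilpotent_mat_def
proof (intro exI[of _ n])
  show "lower_toeplitz n a ^\<^sub>m n = 0\<^sub>m (dim_row (lower_toeplitz n a)) (dim_col (lower_toeplitz n a))"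
    unfolding lower_toeplitz_power using fps_nth_power_eq_0[OF assms] by (intro eq_matI) auto
qed

section \<open>The functional calculus on lower triangular Toeplitz matrices\<close>

lemma resolvent_eqI:
  assumes S: "S \<in> carrier_mat n n" and B: "B \<in> carrier_mat n n"
    and right: "(z \<cdot>\<^sub>m 1\<^sub>m n - S) * B = 1\<^sub>m n" and left: "B * (z \<cdot>\<^sub>m 1\<^sub>m n - S) = 1\<^sub>m n"
  shows "resolvent S z = B"
  unfolding resolvent_def
proof (rule the_equality)
  show "B \<in> carrier_mat (dim_row S) (dim_row S) \<and> (z \<cdot>\<^sub>m 1\<^sub>m (dim_row S) - S) * B = 1\<^sub>m (dim_row S)"
    using S B right by simp
next
  fix C assume C: "C \<in> carrier_mat (dim_row S) (dim_row S) \<and> (z \<cdot>\<^sub>m 1\<^sub>m (dim_row S) - S) * C = 1\<^sub>m (dim_row S)"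
  have "C = (B * (z \<cdot>\<^sub>m 1\<^sub>m n - S)) * C" using left C S left_mult_one_mat[of C n n] by simp
  also have "\<dots> = B * ((z \<cdot>\<^sub>m 1\<^sub>m n - S) * C)"
    using B C S by (intro assoc_mult_mat) auto
  also have "\<dots> = B" using B C S by simp
  finally show "C = B" .
qed

definition neumann_sum :: "complex fps \<Rightarrow> nat \<Rightarrow> complex \<Rightarrow> complex fps" where
  "neumann_sum a n z = (\<Sum>k<n. fps_const (1 / z ^ Suc k) * a ^ k)"

lemma neumann_sum_nth: "fps_nth (neumann_sum a n z) m = (\<Sum>k<n. fps_nth (a ^ k) m / z ^ Suc k)"
  unfolding neumann_sum_def by (simp add: fps_sum_nth)

lemma neumann_sum_telescope:
  assumes "z \<noteq> 0"
  shows "(fps_const z - a) * neumann_sum a n z = 1 - fps_const (1 / z ^ n) * a ^ n"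
proof (induction n)
  case 0 thus ?case by (simp add: neumann_sum_def)
next
  case (Suc n)
  have z: "fps_const z * fps_const (1 / z ^ Suc n) = fps_const (1 / z ^ n)"
    using assms by (simp add: field_simps)
  have "(fps_const z - a) * neumann_sum a (Suc n) z = (fps_const z - a) * neumann_sum a n z +
     (fps_const z * fps_const (1 / z ^ Suc n)) * a ^ n - fps_const (1 / z ^ Suc n) * a ^ Suc n"
    by (simp add: neumann_sum_def algebra_simps)
  also have "\<dots> = 1 - fps_const (1 / z ^ Suc n) * a ^ Suc n"
    unfolding z Suc by simp
  finally show ?case .
qed

lemma resolvent_lower_toeplitz:
  assumes "z \<noteq> 0" "fps_nth a 0 = 0"
  shows "resolvent (lower_toeplitz n a) z = lower_toeplitz n (neumann_sum a n z)"
proof (rule resolvent_eqI)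
  have shift: "z \<cdot>\<^sub>m 1\<^sub>m n - lower_toeplitz n a = lower_toeplitz n (fps_const z - a)"
    by (simp add: lower_toeplitz_diff lower_toeplitz_const)
  have inverse: "lower_toeplitz n ((fps_const z - a) * neumann_sum a n z) = 1\<^sub>m n"
    unfolding neumann_sum_telescope[OF assms(1)] lower_toeplitz_one[symmetric]
    using fps_nth_power_eq_0[OF assms(2)] by (intro lower_toeplitz_cong) auto
  show "(z \<cdot>\<^sub>m 1\<^sub>m n - lower_toeplitz n a) * lower_toeplitz n (neumann_sum a n z) = 1\<^sub>m n"
    unfolding shift lower_toeplitz_mult inverse ..
  show "lower_toeplitz n (neumann_sum a n z) * (z \<cdot>\<^sub>m 1\<^sub>m n - lower_toeplitz n a) = 1\<^sub>m n"
    unfolding shift lower_toeplitz_mult using inverse by (simp add: mult.commute)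
qed auto

lemma has_contour_integral_circlepath_param:
  assumes "(f has_contour_integral I) (circlepath z \<rho>)"
  shows "((\<lambda>t. f (z + of_real \<rho> * cis t) * (\<i> * of_real \<rho> * cis t)) has_integral I) {0..2*pi}"
proof -
  define h where "h = (\<lambda>t. f (z + of_real \<rho> * cis t) * (\<i> * of_real \<rho> * cis t))"
  have "((\<lambda>t. f (circlepath z \<rho> t) * vector_derivative (circlepath z \<rho>) (at t within {0..1}))
      has_integral I) {0..1}"
    using assms unfolding has_contour_integral_def .
  hence "((\<lambda>t. of_real (2*pi) * h (2*pi*t)) has_integral I) {0..1}"
  proof (rule has_integral_spike_finite[where S="{}", rotated 2], simp)
    fix t :: real assume "t \<in> {0..1} - {}"
    hence "vector_derivative (circlepath z \<rho>) (at t within {0..1}) =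
        2 * pi * \<i> * \<rho> * exp (2 * of_real pi * \<i> * t)"
      by (intro vector_derivative_circlepath01) auto
    moreover have "cis (2*pi*t) = exp (2 * of_real pi * \<i> * of_real t)"
      by (simp add: cis_conv_exp mult_ac)
    ultimately show "of_real (2*pi) * h (2*pi*t) =
        f (circlepath z \<rho> t) * vector_derivative (circlepath z \<rho>) (at t within {0..1})"
      unfolding h_def by (simp add: circlepath field_simps)
  qed
  hence "((\<lambda>t. h (2*pi*t)) has_integral (I / of_real (2*pi))) {0..1}"
    using has_integral_mult_right[of "\<lambda>t. of_real (2*pi) * h (2*pi*t)" I "{0..1}" "1 / of_real (2*pi)"]
    by simp
  moreover have "(\<lambda>x. x / (2*pi)) ` {0..2*pi} = {0..1::real}"
    by (auto simp: image_iff intro!: bexI[where x="_ * (2*pi)"])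
  ultimately have "((\<lambda>t. h (2*pi*t)) has_integral (I / of_real (2*pi))) ((\<lambda>x. x / (2*pi)) ` {0..2*pi})"
    by simp
  hence "(h has_integral (\<bar>2*pi\<bar> *\<^sub>R (I / of_real (2*pi)))) {0..2*pi}"
    by (subst (asm) has_integral_stretch_real_iff) auto
  thus ?thesis unfolding h_def by (simp add: scaleR_conv_of_real)
qed

lemma Cauchy_higher_derivative_circle_param:
  assumes holo: "f holomorphic_on ball 0 R" and \<rho>: "0 < \<rho>" "\<rho> < R"
  shows "((\<lambda>t. f (of_real \<rho> * cis t) / (of_real \<rho> * cis t) ^ Suc k * (\<i> * of_real \<rho> * cis t))
           has_integral (2*pi*\<i> / fact k * (deriv^^k) f 0)) {0..2*pi}"
proof -
  have "cball 0 \<rho> \<subseteq> ball (0::complex) R" using \<rho> by auto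
  hence "continuous_on (cball 0 \<rho>) f"
    using holomorphic_on_imp_continuous_on[OF holo] continuous_on_subset by blast
  moreover have "f holomorphic_on ball 0 \<rho>"
    using holo by (rule holomorphic_on_subset) (use \<rho> in auto)
  ultimately have "((\<lambda>u. f u / (u - 0) ^ Suc k) has_contour_integral
      (2*pi*\<i> / fact k * (deriv^^k) f 0)) (circlepath 0 \<rho>)"
    using \<rho> by (intro Cauchy_has_contour_integral_higher_derivative_circlepath) auto
  from has_contour_integral_circlepath_param[OF this] show ?thesis
    by (simp only: add_0 diff_zero)
qed

lemma rd_circle_lower_toeplitz:
  assumes holo: "f holomorphic_on ball 0 R" and \<rho>: "0 < \<rho>" "\<rho> < R"
    and a0: "fps_nth a 0 = 0" and ij: "i < n" "j < n"
  shows "rd_circle f (lower_toeplitz n a) \<rho> $$ (i,j) =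
    lower_toeplitz n (fps_expansion f 0 oo a) $$ (i,j)"
proof (cases "j \<le> i")
  case False
  thus ?thesis using ij \<rho> by (simp add: rd_circle_def resolvent_lower_toeplitz[OF _ a0])
next
  case True
  define m where "m = i - j"
  have mn: "m < n" using ij unfolding m_def by auto
  define F where "F = (\<lambda>k t. f (of_real \<rho> * cis t) / (of_real \<rho> * cis t) ^ Suc k * (\<i> * of_real \<rho> * cis t))"
  define D where "D = (\<lambda>k. (deriv^^k) f 0)"
  have integral: "((\<lambda>t. \<Sum>k<n. fps_nth (a ^ k) m * F k t) has_integral
      (\<Sum>k<n. fps_nth (a ^ k) m * (2*pi*\<i> / fact k * D k))) {0..2*pi}"
    unfolding F_def D_def
    by (intro has_integral_sum has_integral_mult_right Cauchy_higher_derivative_circle_param[OF holo \<rho>]) auto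
  have "(\<lambda>t. f (of_real \<rho> * cis t) * resolvent (lower_toeplitz n a) (of_real \<rho> * cis t) $$ (i,j) *
        (\<i> * of_real \<rho> * cis t)) = (\<lambda>t. \<Sum>k<n. fps_nth (a ^ k) m * F k t)"
    using True ij \<rho> unfolding F_def m_def
    by (auto simp: resolvent_lower_toeplitz[OF _ a0] neumann_sum_nth sum_distrib_left sum_distrib_right
             intro!: sum.cong)
  hence "rd_circle f (lower_toeplitz n a) \<rho> $$ (i,j) =
      (\<Sum>k<n. fps_nth (a ^ k) m * (2*pi*\<i> / fact k * D k)) / (2 * of_real pi * \<i>)"
    using ij unfolding rd_circle_def by (simp add: integral_unique[OF integral])
  also have "\<dots> = (\<Sum>k<n. fps_nth (a ^ k) m * (D k / fact k))"
    by (simp add: sum_divide_distrib field_simps)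
  also have "\<dots> = (\<Sum>k\<in>{0..m}. fps_nth (a ^ k) m * (D k / fact k))"
    using mn fps_nth_power_eq_0[OF a0] by (intro sum.mono_neutral_right) auto
  also have "\<dots> = fps_nth (fps_expansion f 0 oo a) m"
    by (simp add: fps_compose_nth fps_expansion_def D_def mult.commute)
  finally show ?thesis using ij True by (simp add: m_def)
qed

lemma holo_calc0_lower_toeplitz:
  assumes holo: "f holomorphic_on ball 0 R" and "0 < R" and a0: "fps_nth a 0 = 0"
  shows "holo_calc0 f (lower_toeplitz n a) = lower_toeplitz n (fps_expansion f 0 oo a)"
proof (intro eq_matI)
  fix i j assume "i < dim_row (lower_toeplitz n (fps_expansion f 0 oo a))"
    "j < dim_col (lower_toeplitz n (fps_expansion f 0 oo a))"
  hence ij: "i < n" "j < n" by auto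
  have "eventually (\<lambda>\<rho>. rd_circle f (lower_toeplitz n a) \<rho> $$ (i,j) =
      lower_toeplitz n (fps_expansion f 0 oo a) $$ (i,j)) (at_right 0)"
    using eventually_at_right_real[OF \<open>0 < R\<close>]
    by eventually_elim (intro rd_circle_lower_toeplitz[OF holo _ _ a0 ij], auto)
  hence "((\<lambda>\<rho>. rd_circle f (lower_toeplitz n a) \<rho> $$ (i,j)) \<longlongrightarrow>
      lower_toeplitz n (fps_expansion f 0 oo a) $$ (i,j)) (at_right 0)"
    by (rule tendsto_eventually[OF eventually_mono]) simp
  hence "Lim (at_right 0) (\<lambda>\<rho>. rd_circle f (lower_toeplitz n a) \<rho> $$ (i,j)) =
      lower_toeplitz n (fps_expansion f 0 oo a) $$ (i,j)"
    by (intro tendsto_Lim) auto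
  thus "holo_calc0 f (lower_toeplitz n a) $$ (i,j) = lower_toeplitz n (fps_expansion f 0 oo a) $$ (i,j)"
    using ij unfolding holo_calc0_def by simp
qed (auto simp: holo_calc0_def)

section \<open>The operator norm\<close>

lemma vec_norm2_eq_L2_set: "vec_norm2 v = L2_set (\<lambda>i. cmod (v $ i)) {..<dim_vec v}"
  unfolding vec_norm2_def L2_set_def ..

lemma norm_index_le_vec_norm2: "i < dim_vec v \<Longrightarrow> cmod (v $ i) \<le> vec_norm2 v"
  unfolding vec_norm2_eq_L2_set by (rule member_le_L2_set) auto

lemma vec_norm2_unit_vec: "j < n \<Longrightarrow> vec_norm2 (unit_vec n j) = 1"
proof -
  assume j: "j < n"
  have "(\<Sum>i<n. (cmod (unit_vec n j $ i))\<^sup>2) = (\<Sum>i<n. if i = j then 1 else 0)"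
    using j by (intro sum.cong) auto
  thus ?thesis unfolding vec_norm2_def using j by simp
qed

lemma vec_norm2_mult_mat_vec_le:
  assumes v: "dim_vec v = dim_col A" "vec_norm2 v = 1"
  shows "vec_norm2 (A *\<^sub>v v) \<le> (\<Sum>i<dim_row A. \<Sum>j<dim_col A. cmod (A $$ (i,j)))"
proof -
  have "vec_norm2 (A *\<^sub>v v) \<le> (\<Sum>i<dim_row A. cmod ((A *\<^sub>v v) $ i))"
    unfolding vec_norm2_eq_L2_set dim_mult_mat_vec by (intro L2_set_le_sum) auto
  also have "\<dots> \<le> (\<Sum>i<dim_row A. \<Sum>j<dim_col A. cmod (A $$ (i,j)))"
  proof (rule sum_mono)
    fix i assume i: "i \<in> {..<dim_row A}"
    have "cmod ((A *\<^sub>v v) $ i) = cmod (\<Sum>j\<in>{0..<dim_col A}. A $$ (i,j) * v $ j)"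
      using i v by (simp add: scalar_prod_def)
    also have "\<dots> \<le> (\<Sum>j\<in>{0..<dim_col A}. cmod (A $$ (i,j) * v $ j))" by (rule norm_sum)
    also have "\<dots> \<le> (\<Sum>j\<in>{0..<dim_col A}. cmod (A $$ (i,j)))"
    proof (rule sum_mono)
      fix j assume "j \<in> {0..<dim_col A}"
      hence "cmod (v $ j) \<le> 1" using norm_index_le_vec_norm2[of j v] v by simp
      thus "cmod (A $$ (i,j) * v $ j) \<le> cmod (A $$ (i,j))"
        by (simp add: norm_mult mult_left_le)
    qed
    finally show "cmod ((A *\<^sub>v v) $ i) \<le> (\<Sum>j<dim_col A. cmod (A $$ (i,j)))"
      by (simp add: atLeast0LessThan)
  qed
  finally show ?thesis .
qed

lemma bdd_above_op_norm_set:
  "bdd_above {vec_norm2 (A *\<^sub>v v) | v. v \<in> carrier_vec (dim_col A) \<and> vec_norm2 v = 1}"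
  by (rule bdd_aboveI[where M="\<Sum>i<dim_row A. \<Sum>j<dim_col A. cmod (A $$ (i,j))"])
     (auto intro!: vec_norm2_mult_mat_vec_le)

lemma op_norm_ge:
  "v \<in> carrier_vec (dim_col A) \<Longrightarrow> vec_norm2 v = 1 \<Longrightarrow> vec_norm2 (A *\<^sub>v v) \<le> op_norm A"
  unfolding op_norm_def by (rule cSup_upper[OF _ bdd_above_op_norm_set]) auto

lemma op_norm_le:
  assumes "0 < dim_col A"
    and "\<And>v. v \<in> carrier_vec (dim_col A) \<Longrightarrow> vec_norm2 v = 1 \<Longrightarrow> vec_norm2 (A *\<^sub>v v) \<le> C"
  shows "op_norm A \<le> C"
  unfolding op_norm_def
proof (rule cSup_least)
  show "{vec_norm2 (A *\<^sub>v v) | v. v \<in> carrier_vec (dim_col A) \<and> vec_norm2 v = 1} \<noteq> {}"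
    using vec_norm2_unit_vec[OF assms(1)] by (auto intro!: exI[of _ "unit_vec (dim_col A) 0"])
qed (use assms(2) in auto)

lemma norm_index_le_op_norm:
  assumes A: "A \<in> carrier_mat n m" and ij: "i < n" "j < m"
  shows "cmod (A $$ (i,j)) \<le> op_norm A"
proof -
  have "(A *\<^sub>v unit_vec m j) $ i = (\<Sum>l\<in>{0..<m}. A $$ (i,l) * unit_vec m j $ l)"
    using A ij by (simp add: scalar_prod_def)
  also have "\<dots> = (\<Sum>l\<in>{0..<m}. if l = j then A $$ (i,l) else 0)"
    using ij by (intro sum.cong) auto
  finally have "cmod (A $$ (i,j)) = cmod ((A *\<^sub>v unit_vec m j) $ i)"
    using ij by simp
  also have "\<dots> \<le> vec_norm2 (A *\<^sub>v unit_vec m j)"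
    using A ij by (intro norm_index_le_vec_norm2) auto
  also have "\<dots> \<le> op_norm A"
    using A ij by (intro op_norm_ge) (auto simp: vec_norm2_unit_vec)
  finally show ?thesis .
qed

lemma L2_set_shift_le:
  fixes g :: "nat \<Rightarrow> real"
  shows "L2_set (\<lambda>i. if i \<ge> 1 then g (i - 1) else 0) {..<n} \<le> L2_set g {..<n}"
proof (cases n)
  case (Suc k)
  have "(\<Sum>i<n. (if i \<ge> 1 then g (i - 1) else 0)\<^sup>2) = (\<Sum>i<k. (g i)\<^sup>2)"
    unfolding Suc sum.lessThan_Suc_shift by simp
  also have "\<dots> \<le> (\<Sum>i<n. (g i)\<^sup>2)" unfolding Suc by simp
  finally show ?thesis unfolding L2_set_def by simp
qed simp

lemma mult_mat_vec_lower_toeplitz_one_minus_X: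
  assumes "i < n" "dim_vec v = n"
  shows "(lower_toeplitz n (1 - fps_const c * fps_X) *\<^sub>v v) $ i =
    v $ i - (if i \<ge> 1 then c * v $ (i - 1) else 0)"
proof -
  have "(lower_toeplitz n (1 - fps_const c * fps_X) *\<^sub>v v) $ i =
      (\<Sum>l\<in>{0..<n}. lower_toeplitz n (1 - fps_const c * fps_X) $$ (i,l) * v $ l)"
    using assms by (simp add: scalar_prod_def)
  also have "\<dots> = (\<Sum>l\<in>{0..<n}. (if l = i then v $ l else 0) - (if i \<ge> 1 \<and> l = i - 1 then c * v $ l else 0))"
    using assms by (intro sum.cong) (auto simp: fps_X_nth)
  also have "\<dots> = v $ i - (if i \<ge> 1 then c * v $ (i - 1) else 0)"
  proof (cases "i \<ge> 1")
    case True
    thus ?thesis using assms by (simp add: sum_subtractf)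
  qed (use assms in \<open>simp add: sum_subtractf\<close>)
  finally show ?thesis .
qed

lemma op_norm_lower_toeplitz_one_minus_X:
  assumes "0 < n"
  shows "op_norm (lower_toeplitz n (1 - fps_const c * fps_X)) \<le> 1 + cmod c"
proof (rule op_norm_le)
  fix v assume "v \<in> carrier_vec (dim_col (lower_toeplitz n (1 - fps_const c * fps_X)))" "vec_norm2 v = 1"
  hence v: "dim_vec v = n" and unit: "L2_set (\<lambda>i. cmod (v $ i)) {..<n} = 1"
    by (auto simp: vec_norm2_eq_L2_set)
  define g where "g = (\<lambda>i. cmod (v $ i))"
  have "vec_norm2 (lower_toeplitz n (1 - fps_const c * fps_X) *\<^sub>v v) =
      L2_set (\<lambda>i. cmod (v $ i - (if i \<ge> 1 then c * v $ (i - 1) else 0))) {..<n}"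
    unfolding vec_norm2_eq_L2_set dim_mult_mat_vec dim_row_lower_toeplitz
    by (intro L2_set_cong refl, subst mult_mat_vec_lower_toeplitz_one_minus_X) (use v in auto)
  also have "\<dots> \<le> L2_set (\<lambda>i. g i + cmod c * (if i \<ge> 1 then g (i - 1) else 0)) {..<n}"
    by (intro L2_set_mono) (auto simp: g_def norm_mult intro: order.trans[OF norm_triangle_ineq4])
  also have "\<dots> \<le> L2_set g {..<n} + L2_set (\<lambda>i. cmod c * (if i \<ge> 1 then g (i - 1) else 0)) {..<n}"
    by (rule L2_set_triangle_ineq)
  also have "\<dots> = L2_set g {..<n} + cmod c * L2_set (\<lambda>i. if i \<ge> 1 then g (i - 1) else 0) {..<n}"
    by (simp add: L2_set_right_distrib)
  also have "\<dots> \<le> L2_set g {..<n} + cmod c * L2_set g {..<n}"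
    using L2_set_shift_le[of g n] by (simp add: mult_left_mono)
  finally show "vec_norm2 (lower_toeplitz n (1 - fps_const c * fps_X) *\<^sub>v v) \<le> 1 + cmod c"
    using unit by (simp add: g_def)
qed (simp add: assms)

section \<open>The square root symbol\<close>

definition S_fps :: "complex fps" where "S_fps = fps_const 4 * fps_X - fps_const 4 * fps_X ^ 2"

lemma S_fps_nth_0: "fps_nth S_fps 0 = 0"
  by (simp add: S_fps_def)

lemma const_minus_S_fps: "fps_const \<tau> - S_fps = fps_of_poly [:\<tau>, -4, 4:]"
  by (rule fps_ext) (simp add: S_fps_def fps_of_poly_nth fps_X_power_iff fps_X_nth coeff_pCons
      split: nat.split)

definition sqrt_shift_fps :: "complex \<Rightarrow> complex fps" where
  "sqrt_shift_fps \<tau> = fps_expansion (\<lambda>z. csqrt (\<tau> - z)) 0 oo S_fps"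

lemma holomorphic_csqrt_shift:
  assumes "0 < Re \<tau>"
  shows "(\<lambda>z. csqrt (\<tau> - z)) holomorphic_on ball 0 (Re \<tau>)"
proof (intro holomorphic_on_csqrt' holomorphic_intros)
  fix z assume "z \<in> ball (0::complex) (Re \<tau>)"
  hence "Re z < Re \<tau>" using complex_Re_le_cmod[of z] by simp
  thus "\<tau> - z \<notin> \<real>\<^sub>\<le>\<^sub>0" by (auto simp: complex_nonpos_Reals_iff)
qed

lemma sqrt_shift_lower_toeplitz:
  assumes "0 < Re \<tau>"
  shows "sqrt_shift \<tau> (lower_toeplitz n S_fps) = lower_toeplitz n (sqrt_shift_fps \<tau>)"
  unfolding sqrt_shift_def sqrt_shift_fps_def using holomorphic_csqrt_shift[OF assms] assms S_fps_nth_0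
  by (intro holo_calc0_lower_toeplitz) auto

lemma sqrt_shift_fps_nth_0: "fps_nth (sqrt_shift_fps \<tau>) 0 = csqrt \<tau>"
  by (simp add: sqrt_shift_fps_def fps_expansion_def)

lemma fps_expansion_csqrt_shift_square:
  assumes "0 < Re \<tau>"
  shows "fps_expansion (\<lambda>z. csqrt (\<tau> - z)) 0 * fps_expansion (\<lambda>z. csqrt (\<tau> - z)) 0 =
    fps_const \<tau> - fps_X"
proof -
  have "(\<lambda>z. csqrt (\<tau> - z)) has_fps_expansion fps_expansion (\<lambda>z. csqrt (\<tau> - z)) 0"
    using holomorphic_csqrt_shift[OF assms] assms
    by (intro has_fps_expansion_fps_expansion[of "ball 0 (Re \<tau>)"]) auto
  hence square: "(\<lambda>z. csqrt (\<tau> - z) * csqrt (\<tau> - z)) has_fps_expansion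
      fps_expansion (\<lambda>z. csqrt (\<tau> - z)) 0 * fps_expansion (\<lambda>z. csqrt (\<tau> - z)) 0"
    by (intro has_fps_expansion_mult)
  have linear: "(\<lambda>z. csqrt (\<tau> - z) * csqrt (\<tau> - z)) has_fps_expansion fps_const \<tau> - fps_X"
    unfolding power2_eq_square[symmetric] power2_csqrt
    by (intro has_fps_expansion_diff has_fps_expansion_const has_fps_expansion_fps_X)
  show ?thesis
    using fps_nth_fps_expansion[OF square] fps_nth_fps_expansion[OF linear] by (intro fps_ext) simp
qed

lemma sqrt_shift_fps_square:
  assumes "0 < Re \<tau>"
  shows "sqrt_shift_fps \<tau> * sqrt_shift_fps \<tau> = fps_const \<tau> - S_fps"
proof -
  have "sqrt_shift_fps \<tau> * sqrt_shift_fps \<tau> =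
      (fps_expansion (\<lambda>z. csqrt (\<tau> - z)) 0 * fps_expansion (\<lambda>z. csqrt (\<tau> - z)) 0) oo S_fps"
    unfolding sqrt_shift_fps_def by (rule fps_compose_mult_distrib[symmetric, OF S_fps_nth_0])
  also have "\<dots> = fps_const \<tau> - S_fps"
    unfolding fps_expansion_csqrt_shift_square[OF assms] by (simp add: fps_compose_sub_distrib S_fps_nth_0)
  finally show ?thesis .
qed

lemma fps_square_eq_imp_eq:
  fixes a b :: "'a::{idom,ring_char_0} fps"
  assumes "a * a = b * b" "fps_nth a 0 = fps_nth b 0" "fps_nth b 0 \<noteq> 0"
  shows "a = b"
proof -
  have "(a - b) * (a + b) = 0" using assms(1) by (simp add: algebra_simps)
  moreover have "fps_nth (a + b) 0 \<noteq> 0" using assms(2,3) by simp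
  hence "a + b \<noteq> 0" by (metis fps_zero_nth)
  ultimately have "a - b = 0" by (metis mult_eq_0_iff)
  thus ?thesis by simp
qed

lemma sqrt_shift_fps_1: "sqrt_shift_fps 1 = 1 - fps_const 2 * fps_X"
proof (rule fps_square_eq_imp_eq)
  show "sqrt_shift_fps 1 * sqrt_shift_fps 1 = (1 - fps_const 2 * fps_X) * (1 - fps_const 2 * fps_X)"
    unfolding sqrt_shift_fps_square[of 1, simplified] S_fps_def
    by (simp add: algebra_simps power2_eq_square fps_const_mult[symmetric] del: fps_const_mult)
qed (simp_all add: sqrt_shift_fps_nth_0)

section \<open>Unboundedness of the square root symbol\<close>

lemma fps_conv_radius_ge_1_if_bounded:
  fixes a :: "complex fps"
  assumes "\<And>m. cmod (fps_nth a m) \<le> B"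
  shows "1 \<le> fps_conv_radius a"
  unfolding fps_conv_radius_def
proof (rule conv_radius_geI_ex')
  fix r :: real assume r: "0 < r" "ereal r < 1"
  have "summable (\<lambda>n. B * r ^ n)" using r by (intro summable_mult summable_geometric) auto
  moreover have "norm (fps_nth a n * of_real r ^ n) \<le> B * r ^ n" for n
    using r assms[of n] by (simp add: norm_mult norm_power mult_right_mono)
  ultimately show "summable (\<lambda>n. fps_nth a n * of_real r ^ n)"
    by (rule summable_comparison_test'[where N=0])
qed

lemma has_field_derivative_zero_if_square_root:
  fixes h g :: "'a::real_normed_field \<Rightarrow> 'a"
  assumes h: "(h has_field_derivative h') (at w)" and g: "(g has_field_derivative g') (at w)"
    and U: "open U" "w \<in> U" and square: "\<And>x. x \<in> U \<Longrightarrow> h x * h x = g x" and "g w = 0"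
  shows "g' = 0"
proof -
  have "h w = 0" using square[OF U(2)] \<open>g w = 0\<close> by simp
  have "((\<lambda>x. h x * h x) has_field_derivative h w * h' + h' * h w) (at w)"
    using DERIV_mult[OF h h] by (simp add: mult.commute)
  hence "(g has_field_derivative h w * h' + h' * h w) (at w)"
    by (rule has_field_derivative_transform_within_open[OF _ U]) (simp add: square)
  thus "g' = 0" using DERIV_unique[OF g] \<open>h w = 0\<close> by simp
qed

lemma sqrt_shift_fps_unbounded:
  assumes re: "0 < Re \<tau>" and "\<tau> \<noteq> 1" and near: "cmod (1 - \<tau>) < 1"
  shows "\<exists>m. B < cmod (fps_nth (sqrt_shift_fps \<tau>) m)"
proof (rule ccontr)
  assume "\<not> ?thesis"
  hence radius: "1 \<le> fps_conv_radius (sqrt_shift_fps \<tau>)"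
    by (intro fps_conv_radius_ge_1_if_bounded[where B=B]) (auto simp: not_less)
  have in_disc: "ereal (norm w) < fps_conv_radius (sqrt_shift_fps \<tau>)" if "w \<in> ball 0 1" for w :: complex
  proof -
    have "ereal (norm w) < 1" using that by simp
    thus ?thesis using radius by (rule less_le_trans)
  qed
  define h where "h = eval_fps (sqrt_shift_fps \<tau>)"
  have square: "h w * h w = \<tau> - 4 * w + 4 * w^2" if "w \<in> ball 0 1" for w
  proof -
    have "h w * h w = eval_fps (sqrt_shift_fps \<tau> * sqrt_shift_fps \<tau>) w"
      unfolding h_def using in_disc[OF that] by (simp add: eval_fps_mult)
    also have "\<dots> = \<tau> - 4 * w + 4 * w^2"
      unfolding sqrt_shift_fps_square[OF re] const_minus_S_fps by (simp add: algebra_simps power2_eq_square)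
    finally show ?thesis .
  qed
  define w0 where "w0 = (1 - csqrt (1 - \<tau>)) / 2"
  have "cmod w0 \<le> (1 + cmod (csqrt (1 - \<tau>))) / 2"
    unfolding w0_def using norm_triangle_ineq4[of 1 "csqrt (1 - \<tau>)"] by (simp add: norm_divide)
  also have "cmod (csqrt (1 - \<tau>)) < 1" using near by simp
  finally have w0: "w0 \<in> ball 0 1" by simp
  have "\<tau> - 4 * w0 + 4 * w0^2 = \<tau> - 1 + (1 - 2 * w0)^2" by (simp add: algebra_simps power2_eq_square)
  also have "1 - 2 * w0 = csqrt (1 - \<tau>)" unfolding w0_def by (simp add: field_simps)
  finally have root: "\<tau> - 4 * w0 + 4 * w0^2 = 0" by simp
  obtain h' where h': "(h has_field_derivative h') (at w0)"
    using has_field_derivative_eval_fps[OF in_disc[OF w0]] unfolding h_def by blast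
  have "((\<lambda>w. \<tau> - 4 * w + 4 * w^2) has_field_derivative (8 * w0 - 4)) (at w0)"
    by (auto intro!: derivative_eq_intros)
  from has_field_derivative_zero_if_square_root[OF h' this open_ball w0 square root]
  have "8 * w0 - 4 = 0" .
  hence "csqrt (1 - \<tau>) = 0" unfolding w0_def by (simp add: field_simps)
  thus False using \<open>\<tau> \<noteq> 1\<close> by simp
qed

lemma sqrt_shift_fps_nth_recurrence:
  assumes re: "0 < Re \<tau>" and m: "1 \<le> m"
  shows "fps_nth (sqrt_shift_fps \<tau>) m = (- fps_nth S_fps m -
    (\<Sum>i\<in>{1..m-1}. fps_nth (sqrt_shift_fps \<tau>) i * fps_nth (sqrt_shift_fps \<tau>) (m - i))) / (2 * csqrt \<tau>)"
proof -
  define a where "a = sqrt_shift_fps \<tau>"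
  have "csqrt \<tau> \<noteq> 0" using re by auto
  have split: "{0..m} = insert 0 (insert m {1..m-1})" using m by auto
  have "- fps_nth S_fps m = fps_nth (a * a) m"
    unfolding a_def sqrt_shift_fps_square[OF re] using m by simp
  also have "\<dots> = (\<Sum>i\<in>{0..m}. fps_nth a i * fps_nth a (m - i))" by (simp add: fps_mult_nth)
  also have "\<dots> = 2 * csqrt \<tau> * fps_nth a m + (\<Sum>i\<in>{1..m-1}. fps_nth a i * fps_nth a (m - i))"
    unfolding split using m by (simp add: a_def sqrt_shift_fps_nth_0 algebra_simps)
  finally show ?thesis using \<open>csqrt \<tau> \<noteq> 0\<close> unfolding a_def by (simp add: field_simps)
qed

lemma continuous_on_sqrt_shift_fps_nth:
  "continuous_on {\<tau>. 0 < Re \<tau>} (\<lambda>\<tau>. fps_nth (sqrt_shift_fps \<tau>) m)"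
proof (induction m rule: less_induct)
  case (less m)
  have "{\<tau>. 0 < Re \<tau>} \<subseteq> - \<real>\<^sub>\<le>\<^sub>0" by (auto simp: complex_nonpos_Reals_iff)
  hence csqrt: "continuous_on {\<tau>. 0 < Re \<tau>} csqrt"
    by (rule continuous_on_subset[OF continuous_on_csqrt])
  show ?case
  proof (cases "m = 0")
    case True
    thus ?thesis by (simp add: sqrt_shift_fps_nth_0 csqrt)
  next
    case False
    have "continuous_on {\<tau>. 0 < Re \<tau>} (\<lambda>\<tau>. (- fps_nth S_fps m -
        (\<Sum>i\<in>{1..m-1}. fps_nth (sqrt_shift_fps \<tau>) i * fps_nth (sqrt_shift_fps \<tau>) (m - i))) / (2 * csqrt \<tau>))"
      using False by (intro continuous_intros csqrt less.IH) auto
    thus ?thesis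
      by (rule continuous_on_cong[THEN iffD1, rotated 2]) (use False sqrt_shift_fps_nth_recurrence in auto)
  qed
qed

lemma compact_uniform_index_bound:
  fixes f :: "nat \<Rightarrow> 'a::topological_space \<Rightarrow> real"
  assumes "compact K" "open D" "K \<subseteq> D" "\<And>m. continuous_on D (f m)"
    and "\<And>x. x \<in> K \<Longrightarrow> \<exists>m. M < f m x"
  shows "\<exists>N. \<forall>x\<in>K. \<exists>m<N. M < f m x"
proof -
  define U where "U = (\<lambda>m. f m -` {M<..} \<inter> D)"
  have "open (U m)" for m
    unfolding U_def using assms(2,4) continuous_on_open_vimage open_greaterThan by blast
  moreover have "K \<subseteq> (\<Union>m\<in>UNIV. U m)" using assms(3,5) unfolding U_def by fastforce
  ultimately obtain C where "finite C" and cover: "K \<subseteq> (\<Union>m\<in>C. U m)"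
    by (rule compactE_image[OF assms(1)])
  obtain N where N: "C \<subseteq> {..<N}" using finite_nat_bounded[OF \<open>finite C\<close>] by blast
  have "\<exists>m<N. M < f m x" if "x \<in> K" for x
  proof -
    obtain m where "m \<in> C" "x \<in> U m" using cover \<open>x \<in> K\<close> by blast
    thus ?thesis using N unfolding U_def by blast
  qed
  thus ?thesis by blast
qed

lemma Re_pos_if_near_1: "cmod (\<tau> - 1) < 1 \<Longrightarrow> 0 < Re \<tau>"
  using complex_Re_le_cmod[of "1 - \<tau>"] by (simp add: norm_minus_commute)

lemma sqrt_shift_fps_uniformly_unbounded:
  assumes "0 < r" "r < 1"
  shows "\<exists>N. \<forall>\<tau>\<in>sphere 1 r. \<exists>m<N. M < cmod (fps_nth (sqrt_shift_fps \<tau>) m)"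
proof (rule compact_uniform_index_bound)
  show "sphere 1 r \<subseteq> {\<tau>. 0 < Re \<tau>}"
    using assms by (auto simp: dist_norm norm_minus_commute intro: Re_pos_if_near_1)
  show "open {\<tau>::complex. 0 < Re \<tau>}" using open_halfspace_Re_gt[of 0] by simp
  fix \<tau> :: complex assume "\<tau> \<in> sphere 1 r"
  hence "cmod (1 - \<tau>) = r" by (simp add: dist_norm)
  thus "\<exists>m. M < cmod (fps_nth (sqrt_shift_fps \<tau>) m)"
    using assms by (intro sqrt_shift_fps_unbounded Re_pos_if_near_1) (auto simp: norm_minus_commute)
next
  show "continuous_on {\<tau>. 0 < Re \<tau>} (\<lambda>\<tau>. cmod (fps_nth (sqrt_shift_fps \<tau>) m))" for m
    by (intro continuous_on_norm continuous_on_sqrt_shift_fps_nth)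
qed simp

theorem mainTheorem19:
  fixes r M :: real
  assumes "0 < r" "r < 1/2" "0 < M"
  shows "\<exists>n S. 0 < n \<and> S \<in> carrier_mat n n \<and> nilpotent_mat S \<and> op_norm (sqrt_shift 1 S) \<le> 3 \<and>
           (\<forall>\<tau>::complex. cmod (\<tau> - 1) = r \<longrightarrow> op_norm (sqrt_shift \<tau> S) \<ge> M)"
proof -
  obtain N where big: "\<forall>\<tau>\<in>sphere 1 r. \<exists>m<N. M < cmod (fps_nth (sqrt_shift_fps \<tau>) m)"
    using sqrt_shift_fps_uniformly_unbounded[of r M] assms(1,2) by auto
  have "1 + of_real r \<in> sphere (1::complex) r" using assms(1) by (simp add: dist_norm)
  hence "0 < N" using big by fastforce
  define S where "S = lower_toeplitz N S_fps"
  have "op_norm (sqrt_shift 1 S) \<le> 3"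
    using op_norm_lower_toeplitz_one_minus_X[OF \<open>0 < N\<close>, of 2]
    by (simp add: S_def sqrt_shift_lower_toeplitz sqrt_shift_fps_1)
  moreover have "M \<le> op_norm (sqrt_shift \<tau> S)" if \<tau>: "cmod (\<tau> - 1) = r" for \<tau>
  proof -
    have "\<tau> \<in> sphere 1 r" using \<tau> by (simp add: dist_norm norm_minus_commute)
    then obtain m where "m < N" and "M < cmod (fps_nth (sqrt_shift_fps \<tau>) m)" using big by blast
    moreover have "sqrt_shift \<tau> S = lower_toeplitz N (sqrt_shift_fps \<tau>)"
      unfolding S_def using \<tau> assms(2) by (intro sqrt_shift_lower_toeplitz Re_pos_if_near_1) simp
    ultimately show ?thesis
      using norm_index_le_op_norm[of "sqrt_shift \<tau> S" N N m 0] \<open>0 < N\<close> by simp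
  qed
  moreover have "S \<in> carrier_mat N N" "nilpotent_mat S"
    unfolding S_def by (simp_all add: nilpotent_lower_toeplitz S_fps_nth_0)
  ultimately show ?thesis using \<open>0 < N\<close> by blast
qed

end
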